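(* Let $1\le M_{\mathrm{reg}}\le M$ and consider the clipped dendPLRNN $$\bm{z}_t=\bm{A}\bm{z}_{t-1}+\bm{W}\sum_{b=1}^B\alpha_b\big[\max(0,\bm{z}_{t-1}-\bm{h}_b)-\max(0,\bm{z}_{t-1})\big]+\bm{h}_0$$ with $\alpha_b\in\mathbb{R}$, $\bm{h}_b\in\mathbb{R}^M$, where the manifold attractor regularization is strictly enforced, i.e. $$\bm{A}=\begin{pmatrix}\bm{I}_{M_{\mathrm{reg}}}&\bm{0}\\ \bm{0}&\bm{A}_{\mathrm{nreg}}\end{pmatrix},\quad \bm{W}=\begin{pmatrix}\bm{0}_{M_{\mathrm{reg}}\times M_{\mathrm{reg}}}&\bm{0}\\ \bm{S}&\bm{W}_{\mathrm{nreg}}\end{pmatrix},\quad \bm{h}_0=\begin{pmatrix}\bm{0}\\ \bm{h}_0^{\mathrm{nreg}}\end{pmatrix},$$ with $\bm{A}_{\mathrm{nreg}}\in\mathbb{R}^{(M-M_{\mathrm{reg}})\times(M-M_{\mathrm{reg}})}$ diagonal, $\bm{W}_{\mathrm{nreg}}$ of the same size with zero diagonal, $\bm{S}\in\mathbb{R}^{(M-M_{\mathrm{reg}})\times M_{\mathrm{reg}}}$ arbitrary and $\bm{h}_0^{\mathrm{nreg}}\in\mathbb{R}^{M-M_{\mathrm{reg}}}$. If $\sigma_{\max}(\bm{A}_{\mathrm{nreg}})<1$, then every orbit $(\bm{z}_t)_{t\ge1}$ is bounded.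
   Context: $\max$ is taken componentwise; $\sigma_{\max}$ denotes the largest singular value. The manifold attractor regularization penalizes $\sum_{i\le M_{\mathrm{reg}}}(A_{ii}-1)^2+\sum_{i\le M_{\mathrm{reg}}}\sum_{j\neq i}W_{ij}^2+\sum_{i\le M_{\mathrm{reg}}}h_{0,i}^2$; "strictly enforced" means these terms are zero. *)

theory Defs
  imports "HOL-Analysis.Analysis"
begin

text \<open>Vectors in R^n are represented as functions nat \<Rightarrow> real restricted to indices < n,
  n x n matrices as functions nat \<Rightarrow> nat \<Rightarrow> real restricted to indices < n.\<close>

definition vnorm :: "nat \<Rightarrow> (nat \<Rightarrow> real) \<Rightarrow> real" where
  "vnorm n x = sqrt (\<Sum>i<n. (x i)^2)"

definition mat_vec :: "nat \<Rightarrow> (nat \<Rightarrow> nat \<Rightarrow> real) \<Rightarrow> (nat \<Rightarrow> real) \<Rightarrow> (nat \<Rightarrow> real)" where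
  "mat_vec n B x = (\<lambda>i. \<Sum>j<n. B i j * x j)"

definition sigma_max :: "nat \<Rightarrow> (nat \<Rightarrow> nat \<Rightarrow> real) \<Rightarrow> real" where
  "sigma_max n B = (if n = 0 then 0
     else (SUP x \<in> {x. vnorm n x = 1}. vnorm n (mat_vec n B x)))"

definition dendplrnn_step ::
  "nat \<Rightarrow> (nat \<Rightarrow> nat \<Rightarrow> real) \<Rightarrow> (nat \<Rightarrow> nat \<Rightarrow> real) \<Rightarrow> nat \<Rightarrow> (nat \<Rightarrow> real)
   \<Rightarrow> (nat \<Rightarrow> nat \<Rightarrow> real) \<Rightarrow> (nat \<Rightarrow> real) \<Rightarrow> (nat \<Rightarrow> real) \<Rightarrow> nat \<Rightarrow> real" where
  "dendplrnn_step M A W B \<alpha> h h0 z i =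
     (\<Sum>j<M. A i j * z j)
     + (\<Sum>j<M. W i j * (\<Sum>b\<in>{1..B}. \<alpha> b * (max 0 (z j - h b j) - max 0 (z j))))
     + h0 i"

end

theory Submission
  imports Defs
begin

(* The regularized units have identity self-coupling and receive no input, so they stay
   constant. Every other unit i is decoupled from the other units in the linear part and
   obeys the scalar recurrence z_{t+1,i} = a_i z_{t,i} + b_t, where a_i is a diagonal entry
   of A_nreg, so |a_i| <= sigma_max(A_nreg) < 1, and the forcing b_t is bounded uniformly
   in t because each clipped basis function max(0, x - h) - max(0, x) is bounded by |h|.
   A contracting scalar recurrence with bounded forcing has bounded orbits. *)

lemma vnorm_eq_L2_set: "vnorm n x = L2_set x {..<n}"
  by (simp add: vnorm_def L2_set_def)

lemma abs_component_le_vnorm: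
  assumes "j < n"
  shows "\<bar>x j\<bar> \<le> vnorm n x"
proof -
  have "\<bar>x j\<bar> \<le> L2_set (\<lambda>i. \<bar>x i\<bar>) {..<n}"
    using assms by (intro member_le_L2_set) auto
  then show ?thesis
    by (simp add: vnorm_eq_L2_set L2_set_def)
qed

lemma vnorm_mat_vec_le: "vnorm n (mat_vec n B x) \<le> (\<Sum>i<n. vnorm n (B i)) * vnorm n x"
proof -
  have "\<bar>mat_vec n B x i\<bar> \<le> vnorm n (B i) * vnorm n x" for i
  proof -
    have "\<bar>mat_vec n B x i\<bar> \<le> (\<Sum>j<n. \<bar>B i j\<bar> * \<bar>x j\<bar>)"
      unfolding mat_vec_def abs_mult[symmetric] by (rule sum_abs)
    also have "\<dots> \<le> vnorm n (B i) * vnorm n x"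
      unfolding vnorm_eq_L2_set by (rule L2_set_mult_ineq)
    finally show ?thesis .
  qed
  then have "(\<Sum>i<n. \<bar>mat_vec n B x i\<bar>) \<le> (\<Sum>i<n. vnorm n (B i)) * vnorm n x"
    unfolding sum_distrib_right by (intro sum_mono)
  then show ?thesis
    using L2_set_le_sum_abs order_trans unfolding vnorm_eq_L2_set by blast
qed

lemma vnorm_mat_vec_le_sigma_max:
  assumes "vnorm n x = 1"
  shows "vnorm n (mat_vec n B x) \<le> sigma_max n B"
proof -
  have "n \<noteq> 0"
    using assms by (cases "n = 0") (simp_all add: vnorm_def)
  moreover have "bdd_above ((\<lambda>x. vnorm n (mat_vec n B x)) ` {x. vnorm n x = 1})"
  proof (rule bdd_aboveI2)
    fix x assume "x \<in> {x. vnorm n x = 1}"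
    then show "vnorm n (mat_vec n B x) \<le> (\<Sum>i<n. vnorm n (B i))"
      using vnorm_mat_vec_le[of n B x] by simp
  qed
  ultimately show ?thesis
    using assms unfolding sigma_max_def by (auto intro: cSUP_upper)
qed

lemma abs_entry_le_sigma_max:
  assumes "i < n" and "k < n"
  shows "\<bar>B i k\<bar> \<le> sigma_max n B"
proof -
  define e where "e = (\<lambda>j. of_bool (j = k) :: real)"
  have "vnorm n e = 1"
    using assms(2) by (simp add: vnorm_def e_def power2_eq_square)
  moreover have "mat_vec n B e = (\<lambda>i. B i k)"
    using assms(2) by (simp add: mat_vec_def e_def if_distrib cong: if_cong)
  ultimately show ?thesis
    using abs_component_le_vnorm[OF assms(1), of "mat_vec n B e"]
      vnorm_mat_vec_le_sigma_max[of n e B] by simp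
qed

definition clipped_basis :: "nat \<Rightarrow> (nat \<Rightarrow> real) \<Rightarrow> (nat \<Rightarrow> real) \<Rightarrow> real \<Rightarrow> real" where
  "clipped_basis B \<alpha> c x = (\<Sum>b\<in>{1..B}. \<alpha> b * (max 0 (x - c b) - max 0 x))"

lemma dendplrnn_step_eq:
  "dendplrnn_step M A W B \<alpha> h h0 z i =
     (\<Sum>j<M. A i j * z j) + (\<Sum>j<M. W i j * clipped_basis B \<alpha> (\<lambda>b. h b j) (z j)) + h0 i"
  by (simp add: dendplrnn_step_def clipped_basis_def)

lemma abs_max_shift_diff_le: "\<bar>max 0 (x - c) - max 0 x\<bar> \<le> \<bar>c\<bar>" for x c :: real
  by (cases "x \<ge> 0"; cases "x - c \<ge> 0") auto

lemma abs_clipped_basis_le: "\<bar>clipped_basis B \<alpha> c x\<bar> \<le> (\<Sum>b\<in>{1..B}. \<bar>\<alpha> b\<bar> * \<bar>c b\<bar>)"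
  unfolding clipped_basis_def
proof (rule order_trans[OF sum_abs], rule sum_mono)
  fix b
  show "\<bar>\<alpha> b * (max 0 (x - c b) - max 0 x)\<bar> \<le> \<bar>\<alpha> b\<bar> * \<bar>c b\<bar>"
    unfolding abs_mult by (intro mult_left_mono abs_max_shift_diff_le) auto
qed

lemma abs_dendritic_input_le:
  "\<bar>\<Sum>j<M. W i j * clipped_basis B \<alpha> (\<lambda>b. h b j) (x j)\<bar>
     \<le> (\<Sum>j<M. \<bar>W i j\<bar> * (\<Sum>b\<in>{1..B}. \<bar>\<alpha> b\<bar> * \<bar>h b j\<bar>))"
proof (rule order_trans[OF sum_abs], rule sum_mono)
  fix j
  show "\<bar>W i j * clipped_basis B \<alpha> (\<lambda>b. h b j) (x j)\<bar>
      \<le> \<bar>W i j\<bar> * (\<Sum>b\<in>{1..B}. \<bar>\<alpha> b\<bar> * \<bar>h b j\<bar>)"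
    unfolding abs_mult by (intro mult_left_mono abs_clipped_basis_le) auto
qed

lemma sum_diagonal_row:
  fixes A :: "nat \<Rightarrow> nat \<Rightarrow> real"
  assumes "i < M" and "\<And>j. j < M \<Longrightarrow> j \<noteq> i \<Longrightarrow> A i j = 0"
  shows "(\<Sum>j<M. A i j * x j) = A i i * x i"
proof -
  have "(\<Sum>j<M. A i j * x j) = (\<Sum>j<M. if j = i then A i i * x i else 0)"
    using assms(2) by (intro sum.cong) auto
  then show ?thesis
    using assms(1) by simp
qed

lemma affine_recurrence_bounded:
  fixes u b :: "nat \<Rightarrow> real"
  assumes "\<bar>a\<bar> < 1" and "\<And>t. \<bar>b t\<bar> \<le> K" and "\<And>t. u (Suc t) = a * u t + b t"
  shows "\<bar>u t\<bar> \<le> \<bar>u 0\<bar> + K / (1 - \<bar>a\<bar>)"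
proof (induction t)
  case 0
  have "0 \<le> K"
    using assms(2)[of 0] by simp
  then show ?case
    using assms(1) by simp
next
  case (Suc t)
  let ?R = "\<bar>u 0\<bar> + K / (1 - \<bar>a\<bar>)"
  have "\<bar>u (Suc t)\<bar> \<le> \<bar>a\<bar> * \<bar>u t\<bar> + K"
    using assms(2)[of t] abs_triangle_ineq[of "a * u t" "b t"] by (simp add: assms(3) abs_mult)
  also have "\<dots> \<le> \<bar>a\<bar> * ?R + K"
    using Suc.IH by (simp add: mult_left_mono)
  also have "\<dots> = \<bar>a\<bar> * \<bar>u 0\<bar> + K / (1 - \<bar>a\<bar>)"
    using assms(1) by (simp add: field_simps)
  also have "\<dots> \<le> ?R"
    using assms(1) mult_right_mono[of "\<bar>a\<bar>" 1 "\<bar>u 0\<bar>"] by simp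
  finally show ?case .
qed

lemma uniform_bound_finite:
  fixes f :: "nat \<Rightarrow> nat \<Rightarrow> real"
  assumes "\<And>i. i < n \<Longrightarrow> \<exists>R. \<forall>t. \<bar>f t i\<bar> \<le> R"
  shows "\<exists>C. \<forall>t. \<forall>i<n. \<bar>f t i\<bar> \<le> C"
  using assms
proof (induction n)
  case 0
  then show ?case by simp
next
  case (Suc n)
  obtain C where "\<forall>t. \<forall>i<n. \<bar>f t i\<bar> \<le> C"
    using Suc by auto
  moreover obtain R where "\<forall>t. \<bar>f t n\<bar> \<le> R"
    using Suc.prems by blast
  ultimately have "\<bar>f t i\<bar> \<le> max C R" if "i < Suc n" for t i
    using that by (cases "i < n") (auto simp: less_Suc_eq max.coboundedI1 max.coboundedI2)
  then have "\<forall>t. \<forall>i<Suc n. \<bar>f t i\<bar> \<le> max C R"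
    by blast
  then show ?case ..
qed

lemma dendplrnn_coordinate_constant:
  assumes "i < M" and "\<And>j. j < M \<Longrightarrow> A i j = of_bool (i = j)"
    and "\<And>j. j < M \<Longrightarrow> W i j = 0" and "h0 i = 0"
    and "\<And>t. z (Suc t) i = dendplrnn_step M A W B \<alpha> h h0 (z t) i"
  shows "z t i = z 0 i"
proof (induction t)
  case (Suc t)
  have "(\<Sum>j<M. A i j * z t j) = z t i"
    using sum_diagonal_row[of i M A "z t"] assms(1,2) by simp
  then show ?case
    using Suc.IH assms(3-5) by (simp add: dendplrnn_step_eq)
qed simp

lemma dendplrnn_coordinate_bounded:
  assumes "i < M" and "\<And>j. j < M \<Longrightarrow> j \<noteq> i \<Longrightarrow> A i j = 0" and "\<bar>A i i\<bar> < 1"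
    and "\<And>t. z (Suc t) i = dendplrnn_step M A W B \<alpha> h h0 (z t) i"
  shows "\<exists>R. \<forall>t. \<bar>z t i\<bar> \<le> R"
proof -
  define d where "d t = (\<Sum>j<M. W i j * clipped_basis B \<alpha> (\<lambda>b. h b j) (z t j)) + h0 i" for t
  define K where "K = (\<Sum>j<M. \<bar>W i j\<bar> * (\<Sum>b\<in>{1..B}. \<bar>\<alpha> b\<bar> * \<bar>h b j\<bar>)) + \<bar>h0 i\<bar>"
  have "z (Suc t) i = A i i * z t i + d t" for t
    using sum_diagonal_row[of i M A "z t"] assms(1,2,4) by (simp add: dendplrnn_step_eq d_def)
  moreover have "\<bar>d t\<bar> \<le> K" for t
    unfolding d_def K_def
    by (rule order_trans[OF abs_triangle_ineq add_right_mono[OF abs_dendritic_input_le]])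
  ultimately show ?thesis
    using affine_recurrence_bounded[where u = "\<lambda>t. z t i" and b = d, OF assms(3)] by blast
qed

theorem proposition2:
  fixes M Mreg B :: nat
    and A W :: "nat \<Rightarrow> nat \<Rightarrow> real"
    and \<alpha> :: "nat \<Rightarrow> real"
    and h :: "nat \<Rightarrow> nat \<Rightarrow> real"
    and h0 :: "nat \<Rightarrow> real"
    and z :: "nat \<Rightarrow> nat \<Rightarrow> real"
  assumes "1 \<le> Mreg" and "Mreg \<le> M"
    and A_reg: "\<And>i j. i < Mreg \<Longrightarrow> j < M \<Longrightarrow> A i j = (if i = j then 1 else 0)"
    and A_off: "\<And>i j. Mreg \<le> i \<Longrightarrow> i < M \<Longrightarrow> j < Mreg \<Longrightarrow> A i j = 0"
    and A_diag: "\<And>i j. Mreg \<le> i \<Longrightarrow> i < M \<Longrightarrow> Mreg \<le> j \<Longrightarrow> j < M \<Longrightarrow> i \<noteq> j \<Longrightarrow> A i j = 0"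
    and W_reg: "\<And>i j. i < Mreg \<Longrightarrow> j < M \<Longrightarrow> W i j = 0"
    and W_diag: "\<And>i. Mreg \<le> i \<Longrightarrow> i < M \<Longrightarrow> W i i = 0"
    and h0_reg: "\<And>i. i < Mreg \<Longrightarrow> h0 i = 0"
    and sigma: "sigma_max (M - Mreg) (\<lambda>i j. A (Mreg + i) (Mreg + j)) < 1"
    and orbit: "\<And>t i. i < M \<Longrightarrow> z (Suc t) i = dendplrnn_step M A W B \<alpha> h h0 (z t) i"
  shows "\<exists>C. \<forall>t\<ge>1. \<forall>i<M. \<bar>z t i\<bar> \<le> C"
proof -
  have "\<exists>R. \<forall>t. \<bar>z t i\<bar> \<le> R" if "i < M" for i
  proof (cases "i < Mreg")
    case True
    then have "z t i = z 0 i" for t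
      using that A_reg W_reg h0_reg orbit by (intro dendplrnn_coordinate_constant) auto
    then show ?thesis
      by (metis order_refl)
  next
    case False
    have "\<bar>A i i\<bar> \<le> sigma_max (M - Mreg) (\<lambda>k l. A (Mreg + k) (Mreg + l))"
      using abs_entry_le_sigma_max[of "i - Mreg" "M - Mreg" "i - Mreg"
          "\<lambda>k l. A (Mreg + k) (Mreg + l)"] diff_less_mono[of i M Mreg] False that
      by simp
    moreover have "A i j = 0" if "j < M" and "j \<noteq> i" for j
      using A_off[of i j] A_diag[of i j] False \<open>i < M\<close> that by (cases "j < Mreg") auto
    ultimately show ?thesis
      using that sigma orbit by (intro dendplrnn_coordinate_bounded) auto
  qed
  then show ?thesis
    using uniform_bound_finite[of M z] by blast
qed

end
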